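(* In the $\beta$-model, for a fixed positive integer $r$, $$\|W_{22}-\widetilde W_{22}\|_{\max}\lesssim\frac{b_n^6}{n^3c_n^5},$$ where $W_{22}$ is the bottom-right $(n-r)\times(n-r)$ block of $W=V^{-1}-S$ and $\widetilde W_{22}=V_{22}^{-1}-S_{22}$.
   Context: $\beta$-model with parameter $\boldsymbol\beta\in\mathbb R^n$. $V=(v_{ij})$ with $v_{ij}=e^{\beta_i+\beta_j}/(1+e^{\beta_i+\beta_j})^2$ for $i\ne j$ and $v_{ii}=\sum_{j\ne i}v_{ij}$; $S=\mathrm{diag}(1/v_{11},\dots,1/v_{nn})$; $V_{22}$ is the bottom-right $(n-r)\times(n-r)$ block of $V$ and $S_{22}=\mathrm{diag}(1/v_{r+1,r+1},\dots,1/v_{nn})$. $\|J\|_{\max}=\max_{i,j}|J_{ij}|$. $b_n=\max_{i\neq j}(1+e^{\beta_i+\beta_j})^2/e^{\beta_i+\beta_j}$, $c_n=\min_{i\ne j}(\cdot)$. $x\lesssim y$ means $x\le Cy$ for a constant $C$ independent of $n$. *)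

theory Defs
  imports "Jordan_Normal_Form.Gauss_Jordan_Elimination"
begin

text \<open>Beta-model quantities for a parameter vector beta indexed by 0,...,n-1
  (the paper's indices 1,...,n shifted by one).\<close>

definition bm_v :: "(nat \<Rightarrow> real) \<Rightarrow> nat \<Rightarrow> nat \<Rightarrow> real" where
  "bm_v \<beta> i j = exp (\<beta> i + \<beta> j) / (1 + exp (\<beta> i + \<beta> j))^2"

definition bm_V :: "nat \<Rightarrow> (nat \<Rightarrow> real) \<Rightarrow> real mat" where
  "bm_V n \<beta> = mat n n (\<lambda>(i,j). if i = j then (\<Sum>k\<in>{0..<n} - {i}. bm_v \<beta> i k) else bm_v \<beta> i j)"

definition bm_S :: "nat \<Rightarrow> (nat \<Rightarrow> real) \<Rightarrow> real mat" where
  "bm_S n \<beta> = mat n n (\<lambda>(i,j). if i = j then 1 / (bm_V n \<beta> $$ (i,i)) else 0)"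

definition br_block :: "nat \<Rightarrow> real mat \<Rightarrow> real mat" where
  "br_block r M = mat (dim_row M - r) (dim_col M - r) (\<lambda>(i,j). M $$ (i + r, j + r))"

text \<open>Matrix inverse (V and V22 are invertible in the relevant range).\<close>
definition minv :: "real mat \<Rightarrow> real mat" where
  "minv M = the (mat_inverse M)"

definition max_norm :: "real mat \<Rightarrow> real" where
  "max_norm M = Max {\<bar>M $$ (i,j)\<bar> | i j. i < dim_row M \<and> j < dim_col M}"

definition bm_b :: "nat \<Rightarrow> (nat \<Rightarrow> real) \<Rightarrow> real" where
  "bm_b n \<beta> = Max {(1 + exp (\<beta> i + \<beta> j))^2 / exp (\<beta> i + \<beta> j) | i j. i < n \<and> j < n \<and> i \<noteq> j}"

definition bm_c :: "nat \<Rightarrow> (nat \<Rightarrow> real) \<Rightarrow> real" where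
  "bm_c n \<beta> = Min {(1 + exp (\<beta> i + \<beta> j))^2 / exp (\<beta> i + \<beta> j) | i j. i < n \<and> j < n \<and> i \<noteq> j}"

definition bm_W22 :: "nat \<Rightarrow> nat \<Rightarrow> (nat \<Rightarrow> real) \<Rightarrow> real mat" where
  "bm_W22 r n \<beta> = br_block r (minv (bm_V n \<beta>) - bm_S n \<beta>)"

definition bm_W22_tilde :: "nat \<Rightarrow> nat \<Rightarrow> (nat \<Rightarrow> real) \<Rightarrow> real mat" where
  "bm_W22_tilde r n \<beta> = minv (br_block r (bm_V n \<beta>)) - br_block r (bm_S n \<beta>)"

end

theory Submission
  imports Defs "Jordan_Normal_Form.Determinant" "HOL-Analysis.Convex"
begin

text \<open>V = D + W is the signless Laplacian of the complete graph with edge weights v_ij in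
  [1/b_n, 1/c_n]. Its quadratic form is y'Vy = 1/2 sum_ij v_ij (y_i + y_j)^2 >= (n-2)/b_n |y|^2, so
  V and V22 are invertible and every entry of V^-1 is at most b_n/(n-2). The S-terms cancel in
  W22 - tilde W22 = (V^-1)22 - V22^-1. With X = V22^-1 V21, the block-inverse identity gives
  (V^-1)22 - V22^-1 = -X (V^-1)12 and (V^-1)12 = -(X (V^-1)11)', so each entry is at most
  r^2 |X|max^2 |V^-1|max. A column x of X solves V22 x = (column of V21): the quadratic-form bound
  and Cauchy-Schwarz give |x|_1 <= 3 b_n/c_n, and then row i of the system, dominated by its
  diagonal entry >= (n-1)/b_n, gives |x_i| <= 4 b_n^2/((n-1) c_n^2).\<close>

lemma sum_lessThan_if_ge:
  fixes g :: "nat \<Rightarrow> 'a :: comm_monoid_add"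
  shows "(\<Sum>k<n. if r \<le> k then g k else 0) = (\<Sum>k\<in>{r..<n}. g k)"
proof -
  have "{..<n} \<inter> {k. r \<le> k} = {r..<n}" by auto
  then show ?thesis using sum.inter_restrict[of "{..<n}" g "{k. r \<le> k}"] by simp
qed

lemma sum_if_eq_mult:
  fixes f :: "'b \<Rightarrow> 'a :: semiring_1"
  assumes "finite S"
  shows "(\<Sum>m\<in>S. (if i = m then 1 else 0) * f m) = (if i \<in> S then f i else 0)"
  using assms by (simp add: if_distrib[of "\<lambda>x. x * _"] sum.delta cong: if_cong)

lemma sum_atLeastLessThan_eq_sum_lessThan_shift:
  fixes f :: "nat \<Rightarrow> 'a :: comm_monoid_add"
  shows "(\<Sum>k\<in>{r..<n}. f k) = (\<Sum>k<n - r. f (k + r))"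
  by (rule sum.reindex_bij_witness[of _ "\<lambda>k. k + r" "\<lambda>k. k - r"]) auto

lemma abs_le_inverse_if_weighted_squares_le:
  fixes q d x :: real
  assumes q: "0 < q" and d: "q * d\<^sup>2 \<le> d" and x: "q * x\<^sup>2 \<le> d"
  shows "\<bar>x\<bar> \<le> 1 / q"
proof -
  have "q * d \<le> 1"
  proof (cases "d \<le> 0")
    case True then show ?thesis using q mult_nonneg_nonpos[of q d] by linarith
  next
    case False then show ?thesis using d by (simp add: power2_eq_square mult.assoc)
  qed
  moreover have "(q * \<bar>x\<bar>)\<^sup>2 = q * (q * x\<^sup>2)" by (simp add: power2_eq_square)
  moreover have "q * (q * x\<^sup>2) \<le> q * d" using q x by (intro mult_left_mono) auto
  ultimately have "(q * \<bar>x\<bar>)\<^sup>2 \<le> 1\<^sup>2" by simp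
  then have "q * \<bar>x\<bar> \<le> 1" by (rule power2_le_imp_le) simp
  then show ?thesis using q by (simp add: field_simps)
qed

lemma entry_bounds_product_le:
  fixes n b c :: real
  assumes n: "3 \<le> n" and c: "0 < c" and cb: "c \<le> b"
  shows "(4 * b\<^sup>2 / ((n - 1) * c\<^sup>2))\<^sup>2 * (b / (n - 2)) \<le> 108 * b ^ 6 / (n ^ 3 * c ^ 5)"
proof -
  have b: "0 < b" using c cb by linarith
  have cubic: "4 / 27 * n ^ 3 \<le> (n - 1)\<^sup>2 * (n - 2)"
  proof -
    have "(2 * n / 3)\<^sup>2 * (n / 3) \<le> (n - 1)\<^sup>2 * (n - 2)"
      using n by (intro mult_mono power_mono) auto
    then show ?thesis by (simp add: power2_eq_square power3_eq_cube)
  qed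
  have ratio: "b ^ 5 / c ^ 4 \<le> b ^ 6 / c ^ 5"
  proof -
    have "b ^ 5 / c ^ 4 * 1 \<le> b ^ 5 / c ^ 4 * (b / c)" using b c cb by (intro mult_left_mono) auto
    then show ?thesis by (simp add: eval_nat_numeral)
  qed
  have "(4 * b\<^sup>2 / ((n - 1) * c\<^sup>2))\<^sup>2 * (b / (n - 2)) = 16 * (b ^ 5 / c ^ 4) / ((n - 1)\<^sup>2 * (n - 2))"
    using n c by (simp add: field_simps power2_eq_square eval_nat_numeral)
  also have "\<dots> \<le> 16 * (b ^ 6 / c ^ 5) / (4 / 27 * n ^ 3)"
    using n b c ratio cubic by (intro frac_le) auto
  also have "\<dots> = 108 * b ^ 6 / (n ^ 3 * c ^ 5)" by simp
  finally show ?thesis .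
qed

text \<open>Q models V: for the beta-model, w is v off the diagonal and b, c are b_n, c_n.\<close>

locale signless_laplacian =
  fixes n :: nat and w :: "nat \<Rightarrow> nat \<Rightarrow> real" and b c :: real
  assumes n_ge_3: "3 \<le> n"
    and w_sym: "\<And>i j. w i j = w j i"
    and w_diag: "\<And>i. w i i = 0"
    and w_lower: "\<And>i j. i < n \<Longrightarrow> j < n \<Longrightarrow> i \<noteq> j \<Longrightarrow> 1 / b \<le> w i j"
    and w_upper: "\<And>i j. i < n \<Longrightarrow> j < n \<Longrightarrow> w i j \<le> 1 / c"
    and c_pos: "0 < c"
    and c_le_b: "c \<le> b"
begin

definition Q :: "nat \<Rightarrow> nat \<Rightarrow> real" where
  "Q i j = (if i = j then (\<Sum>k<n. w i k) else w i j)"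

lemma b_pos: "0 < b"
  using c_pos c_le_b by linarith

lemma w_nonneg: "i < n \<Longrightarrow> j < n \<Longrightarrow> 0 \<le> w i j"
  using w_lower[of i j] b_pos w_diag[of i] by (cases "i = j") (auto intro: order_trans[rotated])

lemma Q_sym: "Q i j = Q j i"
  by (simp add: Q_def w_sym)

lemma Q_offdiag: "i \<noteq> j \<Longrightarrow> Q i j = w i j"
  by (simp add: Q_def)

lemma Q_diag_lower:
  assumes i: "i < n"
  shows "(real n - 1) / b \<le> Q i i"
proof -
  have "Q i i = (\<Sum>k\<in>{..<n}-{i}. w i k)"
    using i by (simp add: Q_def sum.remove w_diag)
  also have "\<dots> \<ge> (\<Sum>k\<in>{..<n}-{i}. 1 / b)"
    using i by (intro sum_mono w_lower) auto
  also have "(\<Sum>k\<in>{..<n}-{i}. 1 / b) = (real n - 1) / b"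
    using i by (simp add: card_Diff_singleton of_nat_diff)
  finally show ?thesis .
qed

lemma quadratic_form_eq:
  "(\<Sum>i<n. y i * (\<Sum>j<n. Q i j * y j)) = (\<Sum>i<n. \<Sum>j<n. w i j * (y i + y j)\<^sup>2) / 2"
proof -
  let ?A = "\<Sum>i<n. \<Sum>j<n. w i j * (y i)\<^sup>2"
  let ?B = "\<Sum>i<n. \<Sum>j<n. w i j * (y i * y j)"
  have row: "y i * (\<Sum>j<n. Q i j * y j) = (\<Sum>j<n. w i j * (y i)\<^sup>2) + (\<Sum>j<n. w i j * (y i * y j))"
    if "i < n" for i
  proof -
    have "(\<Sum>j<n. Q i j * y j) = Q i i * y i + (\<Sum>j\<in>{..<n}-{i}. w i j * y j)"
      using that by (simp add: sum.remove Q_offdiag)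
    also have "(\<Sum>j\<in>{..<n}-{i}. w i j * y j) = (\<Sum>j<n. w i j * y j)"
      using that by (simp add: sum.remove w_diag)
    finally show ?thesis
      by (simp add: Q_def sum_distrib_left sum_distrib_right power2_eq_square algebra_simps)
  qed
  have "(\<Sum>i<n. y i * (\<Sum>j<n. Q i j * y j)) = ?A + ?B"
    by (simp add: row sum.distrib)
  moreover have "?A = (\<Sum>i<n. \<Sum>j<n. w i j * (y j)\<^sup>2)"
    by (subst sum.swap) (simp add: w_sym)
  ultimately show ?thesis
    by (simp add: power2_eq_square algebra_simps sum.distrib sum_distrib_left)
qed

lemma quadratic_form_lower_bound:
  "(real n - 2) / b * (\<Sum>i<n. (y i)\<^sup>2) \<le> (\<Sum>i<n. y i * (\<Sum>j<n. Q i j * y j))"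
proof -
  let ?S = "\<Sum>i<n. (y i)\<^sup>2"
  have "(\<Sum>i<n. \<Sum>j<n. (y i + y j)\<^sup>2) = 2 * real n * ?S + 2 * (\<Sum>i<n. y i)\<^sup>2"
    by (simp add: power2_eq_square algebra_simps sum.distrib sum_distrib_left sum_product)
  then have "2 * real n * ?S \<le> (\<Sum>i<n. \<Sum>j<n. (y i + y j)\<^sup>2)"
    by simp
  also have "\<dots> \<le> (\<Sum>i<n. \<Sum>j<n. b * (w i j * (y i + y j)\<^sup>2) + (if i = j then (y i + y j)\<^sup>2 else 0))"
  proof (intro sum_mono)
    fix i j assume "i \<in> {..<n}" "j \<in> {..<n}"
    then have "i \<noteq> j \<Longrightarrow> (y i + y j)\<^sup>2 \<le> b * (w i j * (y i + y j)\<^sup>2)"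
      using w_lower[of i j] b_pos mult_right_mono[of "1 / b" "w i j" "(y i + y j)\<^sup>2"]
      by (auto simp: field_simps)
    moreover have "0 \<le> b * (w i j * (y i + y j)\<^sup>2)"
      using \<open>i \<in> {..<n}\<close> \<open>j \<in> {..<n}\<close> w_nonneg b_pos by simp
    ultimately show "(y i + y j)\<^sup>2 \<le> b * (w i j * (y i + y j)\<^sup>2) + (if i = j then (y i + y j)\<^sup>2 else 0)"
      by auto
  qed
  also have "\<dots> = b * (\<Sum>i<n. \<Sum>j<n. w i j * (y i + y j)\<^sup>2) + (\<Sum>i<n. (y i + y i)\<^sup>2)"
    by (simp add: sum.distrib sum_distrib_left)
  also have "(\<Sum>i<n. (y i + y i)\<^sup>2) = 4 * ?S"
    by (simp add: sum_distrib_left power2_eq_square algebra_simps)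
  also have "b * (\<Sum>i<n. \<Sum>j<n. w i j * (y i + y j)\<^sup>2) = b * (2 * (\<Sum>i<n. y i * (\<Sum>j<n. Q i j * y j)))"
    unfolding quadratic_form_eq by simp
  finally have "(real n - 2) * ?S \<le> b * (\<Sum>i<n. y i * (\<Sum>j<n. Q i j * y j))"
    by (simp add: algebra_simps)
  then show ?thesis
    using b_pos by (simp add: field_simps)
qed

lemma eq_zero_if_orthogonal:
  assumes orth: "\<And>i. i < n \<Longrightarrow> y i * (\<Sum>j<n. Q i j * y j) = 0" and "k < n"
  shows "y k = 0"
proof -
  have pos: "0 < (real n - 2) / b"
    using n_ge_3 b_pos by simp
  have "(real n - 2) / b * (\<Sum>i<n. (y i)\<^sup>2) \<le> (real n - 2) / b * 0"
    using quadratic_form_lower_bound[of y] orth by simp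
  then have "(\<Sum>i<n. (y i)\<^sup>2) \<le> 0"
    by (simp only: mult_le_cancel_left_pos[OF pos])
  moreover have "(y k)\<^sup>2 \<le> (\<Sum>i<n. (y i)\<^sup>2)"
    using \<open>k < n\<close> by (intro member_le_sum) auto
  ultimately have "(y k)\<^sup>2 \<le> 0"
    by linarith
  then show "y k = 0"
    by simp
qed

end

text \<open>G and H play the roles of V^-1 and V22^-1; the block V22 keeps the indices r..n-1.\<close>

locale signless_laplacian_inverses = signless_laplacian +
  fixes r :: nat and G H :: "nat \<Rightarrow> nat \<Rightarrow> real"
  assumes r_less_n: "r < n"
    and Q_G: "\<And>i j. i < n \<Longrightarrow> j < n \<Longrightarrow> (\<Sum>l<n. Q i l * G l j) = (if i = j then 1 else 0)"
    and G_Q: "\<And>i j. i < n \<Longrightarrow> j < n \<Longrightarrow> (\<Sum>l<n. G i l * Q l j) = (if i = j then 1 else 0)"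
    and Q_H: "\<And>i j. r \<le> i \<Longrightarrow> i < n \<Longrightarrow> r \<le> j \<Longrightarrow> j < n \<Longrightarrow>
      (\<Sum>l\<in>{r..<n}. Q i l * H l j) = (if i = j then 1 else 0)"
begin

lemma G_sym:
  assumes "i < n" "j < n"
  shows "G i j = G j i"
proof -
  have "G j i = (\<Sum>m<n. (if i = m then 1 else 0) * G j m)"
    using assms by (simp add: sum_if_eq_mult)
  also have "\<dots> = (\<Sum>m<n. (\<Sum>l<n. G i l * Q l m) * G j m)"
    using G_Q assms by (intro sum.cong) auto
  also have "\<dots> = (\<Sum>l<n. G i l * (\<Sum>m<n. G j m * Q m l))"
    unfolding sum_distrib_left sum_distrib_right by (subst sum.swap) (simp add: Q_sym mult_ac)
  also have "\<dots> = (\<Sum>l<n. G i l * (if j = l then 1 else 0))"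
    using G_Q assms by (intro sum.cong) auto
  also have "\<dots> = G i j"
    using assms by (simp add: if_distrib sum.delta cong: if_cong)
  finally show ?thesis ..
qed

text \<open>Column j of G has quadratic form G j j, so the quadratic-form bound controls
  G j j first and then the whole column.\<close>

lemma G_bound:
  assumes "i < n" "j < n"
  shows "\<bar>G i j\<bar> \<le> b / (real n - 2)"
proof -
  let ?q = "(real n - 2) / b"
  have q_pos: "0 < ?q"
    using n_ge_3 b_pos by simp
  have "(\<Sum>l<n. G l j * (\<Sum>k<n. Q l k * G k j)) = (\<Sum>l<n. G l j * (if l = j then 1 else 0))"
    using Q_G assms by (intro sum.cong) auto
  also have "\<dots> = G j j"
    using assms by (simp add: if_distrib sum.delta cong: if_cong)
  finally have column: "?q * (\<Sum>l<n. (G l j)\<^sup>2) \<le> G j j"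
    using quadratic_form_lower_bound[of "\<lambda>l. G l j"] by simp
  have entry: "?q * (G l j)\<^sup>2 \<le> G j j" if "l < n" for l
  proof -
    have "(G l j)\<^sup>2 \<le> (\<Sum>l<n. (G l j)\<^sup>2)"
      using that by (intro member_le_sum) auto
    then show ?thesis
      using column q_pos by (meson mult_left_mono less_imp_le order_trans)
  qed
  have "\<bar>G i j\<bar> \<le> 1 / ?q"
    using abs_le_inverse_if_weighted_squares_le[OF q_pos entry entry] assms by simp
  then show ?thesis
    by simp
qed

text \<open>X = V22^-1 V21, with rows indexed by r..n-1 and columns by 0..r-1.\<close>

definition X :: "nat \<Rightarrow> nat \<Rightarrow> real" where
  "X i l = (\<Sum>m\<in>{r..<n}. H i m * w m l)"

lemma Q_X:
  assumes "r \<le> i" "i < n" "l < r"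
  shows "(\<Sum>m\<in>{r..<n}. Q i m * X m l) = w i l"
proof -
  have "(\<Sum>m\<in>{r..<n}. Q i m * X m l) = (\<Sum>k\<in>{r..<n}. (\<Sum>m\<in>{r..<n}. Q i m * H m k) * w k l)"
    unfolding X_def sum_distrib_left sum_distrib_right by (subst sum.swap) (simp add: mult_ac)
  also have "\<dots> = (\<Sum>k\<in>{r..<n}. (if i = k then 1 else 0) * w k l)"
    using Q_H assms by (intro sum.cong) auto
  also have "\<dots> = w i l"
    using assms by (simp add: sum_if_eq_mult)
  finally show ?thesis .
qed

lemma G_block_residual:
  assumes "r \<le> p" "p < n" "k < n"
  shows "(\<Sum>m\<in>{r..<n}. Q p m * (G m k - (if r \<le> k then H m k else 0) + (\<Sum>l<r. X m l * G l k))) = 0"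
proof -
  let ?h = "\<lambda>m. if r \<le> k then H m k else 0"
  have "(\<Sum>m\<in>{r..<n}. Q p m * (G m k - ?h m + (\<Sum>l<r. X m l * G l k)))
      = (\<Sum>m\<in>{r..<n}. Q p m * G m k - Q p m * ?h m + (\<Sum>l<r. Q p m * (X m l * G l k)))"
    by (simp add: algebra_simps sum_distrib_left)
  also have "\<dots> = (\<Sum>m\<in>{r..<n}. Q p m * G m k) - (\<Sum>m\<in>{r..<n}. Q p m * ?h m)
      + (\<Sum>m\<in>{r..<n}. \<Sum>l<r. Q p m * (X m l * G l k))"
    by (simp only: sum.distrib sum_subtractf)
  also have "(\<Sum>m\<in>{r..<n}. \<Sum>l<r. Q p m * (X m l * G l k))
      = (\<Sum>l<r. G l k * (\<Sum>m\<in>{r..<n}. Q p m * X m l))"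
    by (subst sum.swap) (simp add: sum_distrib_left mult_ac)
  also have "\<dots> = (\<Sum>l<r. Q p l * G l k)"
    using Q_X assms Q_offdiag by (intro sum.cong) auto
  also have "(\<Sum>m\<in>{r..<n}. Q p m * ?h m) = (if p = k then 1 else 0)"
    using Q_H[OF assms(1,2) _ assms(3)] assms by (cases "r \<le> k") auto
  also have "(\<Sum>m\<in>{r..<n}. Q p m * G m k) = (if p = k then 1 else 0) - (\<Sum>l<r. Q p l * G l k)"
    using sum.atLeastLessThan_concat[of 0 r n "\<lambda>m. Q p m * G m k"] Q_G[OF assms(2,3)] r_less_n
    by (simp add: lessThan_atLeast0)
  finally show ?thesis
    by simp
qed

text \<open>Block-inverse identity for column k of V^-1: its lower part equals [k >= r] H e_k - X times
  its upper part, because both are mapped to the same vector by the injective block V22.\<close>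

lemma G_block_decomp:
  assumes "r \<le> i" "i < n" "k < n"
  shows "G i k = (if r \<le> k then H i k else 0) - (\<Sum>l<r. X i l * G l k)"
proof -
  define y where
    "y m = (if r \<le> m then G m k - (if r \<le> k then H m k else 0) + (\<Sum>l<r. X m l * G l k) else 0)"
    for m
  have "y p * (\<Sum>m<n. Q p m * y m) = 0" if "p < n" for p
  proof (cases "r \<le> p")
    case True
    have "(\<Sum>m<n. Q p m * y m)
        = (\<Sum>m\<in>{r..<n}. Q p m * (G m k - (if r \<le> k then H m k else 0) + (\<Sum>l<r. X m l * G l k)))"
      unfolding y_def sum_lessThan_if_ge[symmetric] by (rule sum.cong) auto
    then show ?thesis
      using G_block_residual[OF True that assms(3)] by simp
  qed (simp add: y_def)
  then have "y i = 0"
    using assms(2) by (rule eq_zero_if_orthogonal)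
  then show ?thesis
    using assms by (simp add: y_def)
qed

lemma X_column_quadratic_bound:
  assumes "l < r"
  shows "(real n - 2) / b * (\<Sum>m\<in>{r..<n}. (X m l)\<^sup>2) \<le> (\<Sum>m\<in>{r..<n}. \<bar>X m l\<bar>) / c"
proof -
  define y where "y m = (if r \<le> m then X m l else 0)" for m
  have Qy: "(\<Sum>j<n. Q i j * y j) = w i l" if "r \<le> i" "i < n" for i
  proof -
    have "(\<Sum>j<n. Q i j * y j) = (\<Sum>j\<in>{r..<n}. Q i j * X j l)"
      unfolding y_def sum_lessThan_if_ge[symmetric] by (rule sum.cong) auto
    then show ?thesis
      using Q_X[OF that assms] by simp
  qed
  have "(\<Sum>i<n. y i * (\<Sum>j<n. Q i j * y j)) = (\<Sum>i<n. if r \<le> i then X i l * w i l else 0)"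
    using Qy by (intro sum.cong) (auto simp: y_def)
  also have "\<dots> \<le> (\<Sum>i<n. if r \<le> i then \<bar>X i l\<bar> / c else 0)"
  proof (intro sum_mono)
    fix i assume "i \<in> {..<n}"
    then have "X i l * w i l \<le> \<bar>X i l\<bar> * (1 / c)" if "r \<le> i"
      using assms r_less_n w_nonneg[of i l] w_upper[of i l]
      by (intro mult_mono) auto
    then show "(if r \<le> i then X i l * w i l else 0) \<le> (if r \<le> i then \<bar>X i l\<bar> / c else 0)"
      by simp
  qed
  also have "\<dots> = (\<Sum>m\<in>{r..<n}. \<bar>X m l\<bar>) / c"
    unfolding sum_lessThan_if_ge by (simp add: sum_divide_distrib)
  finally have "(real n - 2) / b * (\<Sum>i<n. (y i)\<^sup>2) \<le> (\<Sum>m\<in>{r..<n}. \<bar>X m l\<bar>) / c"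
    using quadratic_form_lower_bound[of y] by (rule order_trans[rotated])
  moreover have "(\<Sum>i<n. (y i)\<^sup>2) = (\<Sum>m\<in>{r..<n}. (X m l)\<^sup>2)"
    unfolding sum_lessThan_if_ge[symmetric] y_def by (rule sum.cong) auto
  ultimately show ?thesis
    by simp
qed

lemma X_column_l1_bound:
  assumes "l < r"
  shows "(\<Sum>m\<in>{r..<n}. \<bar>X m l\<bar>) \<le> 3 * b / c"
proof -
  define A where "A = (\<Sum>m\<in>{r..<n}. \<bar>X m l\<bar>)"
  define B where "B = (\<Sum>m\<in>{r..<n}. (X m l)\<^sup>2)"
  have A_nonneg: "0 \<le> A"
    unfolding A_def by (intro sum_nonneg) auto
  have B_le: "B \<le> b / (real n - 2) * (A / c)"
    using X_column_quadratic_bound[OF assms] n_ge_3 b_pos c_pos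
    unfolding A_def B_def by (simp add: field_simps)
  have "A\<^sup>2 \<le> B * real (n - r)"
    using sum_squared_le_sum_of_squares[of "\<lambda>m. \<bar>X m l\<bar>" "{r..<n}"]
    unfolding A_def B_def by simp
  also have "\<dots> \<le> (b / (real n - 2) * (A / c)) * real n"
    using B_le A_nonneg b_pos c_pos n_ge_3 by (intro mult_mono) auto
  finally have AA: "A * A \<le> (real n / (real n - 2) * (b / c)) * A"
    by (simp add: power2_eq_square field_simps)
  have "A \<le> real n / (real n - 2) * (b / c)"
  proof (cases "A = 0")
    case True
    then show ?thesis using b_pos c_pos n_ge_3 by simp
  next
    case False
    with A_nonneg show ?thesis
      using mult_right_le_imp_le[OF AA] by simp
  qed
  also have "\<dots> \<le> 3 * (b / c)"
    using b_pos c_pos n_ge_3 by (intro mult_right_mono) (auto simp: field_simps)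
  finally show ?thesis
    unfolding A_def by simp
qed

lemma Q_diag_mult_X_bound:
  assumes "r \<le> i" "i < n" "l < r"
  shows "Q i i * \<bar>X i l\<bar> \<le> 1 / c + (\<Sum>m\<in>{r..<n}. \<bar>X m l\<bar>) / c"
proof -
  let ?R = "\<Sum>m\<in>{r..<n}-{i}. w i m * X m l"
  have "Q i i * X i l + ?R = w i l"
    using Q_X[OF assms] assms by (simp add: sum.remove Q_offdiag)
  then have "\<bar>Q i i * X i l\<bar> = \<bar>w i l - ?R\<bar>"
    by (simp add: algebra_simps)
  moreover have "0 \<le> (real n - 1) / b"
    using n_ge_3 b_pos by simp
  then have "0 \<le> Q i i"
    using Q_diag_lower[of i] assms by linarith
  ultimately have "Q i i * \<bar>X i l\<bar> = \<bar>w i l - ?R\<bar>"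
    by (simp add: abs_mult)
  also have "\<dots> \<le> \<bar>w i l\<bar> + \<bar>?R\<bar>"
    by (rule abs_triangle_ineq4)
  also have "\<bar>w i l\<bar> \<le> 1 / c"
    using assms w_nonneg[of i l] w_upper[of i l] by simp
  also have "\<bar>?R\<bar> \<le> (\<Sum>m\<in>{r..<n}-{i}. \<bar>X m l\<bar> / c)"
  proof (rule order_trans[OF sum_abs sum_mono])
    fix m assume m: "m \<in> {r..<n}-{i}"
    then have "\<bar>w i m * X m l\<bar> = w i m * \<bar>X m l\<bar>"
      using assms w_nonneg[of i m] by (simp add: abs_mult)
    also have "\<dots> \<le> 1 / c * \<bar>X m l\<bar>"
      using m assms w_upper[of i m] by (intro mult_right_mono) auto
    finally show "\<bar>w i m * X m l\<bar> \<le> \<bar>X m l\<bar> / c"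
      by simp
  qed
  also have "\<dots> \<le> (\<Sum>m\<in>{r..<n}. \<bar>X m l\<bar> / c)"
    using c_pos by (intro sum_mono2) auto
  also have "\<dots> = (\<Sum>m\<in>{r..<n}. \<bar>X m l\<bar>) / c"
    by (simp add: sum_divide_distrib)
  finally show ?thesis
    by simp_all
qed

lemma X_bound:
  assumes "r \<le> i" "i < n" "l < r"
  shows "\<bar>X i l\<bar> \<le> 4 * b\<^sup>2 / ((real n - 1) * c\<^sup>2)"
proof -
  have "(real n - 1) / b * \<bar>X i l\<bar> \<le> Q i i * \<bar>X i l\<bar>"
    using Q_diag_lower[of i] assms by (intro mult_right_mono) auto
  also have "\<dots> \<le> 1 / c + (\<Sum>m\<in>{r..<n}. \<bar>X m l\<bar>) / c"
    by (rule Q_diag_mult_X_bound[OF assms])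
  also have "\<dots> \<le> b / c / c + 3 * b / c / c"
    using X_column_l1_bound[OF assms(3)] c_pos c_le_b
    by (intro add_mono divide_right_mono) (auto simp: field_simps)
  finally have "(real n - 1) / b * \<bar>X i l\<bar> \<le> 4 * b / c\<^sup>2"
    by (simp add: power2_eq_square)
  then show ?thesis
    using n_ge_3 b_pos c_pos by (simp add: field_simps power2_eq_square)
qed

lemma G_minus_H_bound:
  assumes "r \<le> i" "i < n" "r \<le> j" "j < n"
  shows "\<bar>G i j - H i j\<bar> \<le> 108 * (real r)\<^sup>2 * b ^ 6 / (real n ^ 3 * c ^ 5)"
proof -
  define x where "x = 4 * b\<^sup>2 / ((real n - 1) * c\<^sup>2)"
  define g where "g = b / (real n - 2)"
  have x_nonneg: "0 \<le> x"
    unfolding x_def using n_ge_3 by simp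
  have G_upper: "\<bar>G l j\<bar> \<le> real r * (x * g)" if "l < r" for l
  proof -
    have "G l j = - (\<Sum>m<r. X j m * G m l)"
      using G_sym[of l j] G_block_decomp[OF assms(3,4), of l] that r_less_n assms(4) by simp
    then have "\<bar>G l j\<bar> = \<bar>\<Sum>m<r. X j m * G m l\<bar>"
      by simp
    also have "\<dots> \<le> (\<Sum>m<r. \<bar>X j m\<bar> * \<bar>G m l\<bar>)"
      by (rule order_trans[OF sum_abs]) (simp add: abs_mult)
    also have "\<dots> \<le> (\<Sum>m<r. x * g)"
      using X_bound[OF assms(3,4)] G_bound that r_less_n x_nonneg
      by (intro sum_mono mult_mono) (auto simp: x_def g_def)
    finally show ?thesis by simp
  qed
  have "\<bar>G i j - H i j\<bar> = \<bar>\<Sum>l<r. X i l * G l j\<bar>"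
    using G_block_decomp[OF assms(1,2,4)] assms(3) by simp
  also have "\<dots> \<le> (\<Sum>l<r. \<bar>X i l\<bar> * \<bar>G l j\<bar>)"
    by (rule order_trans[OF sum_abs]) (simp add: abs_mult)
  also have "\<dots> \<le> (\<Sum>l<r. x * (real r * (x * g)))"
    using X_bound[OF assms(1,2)] G_upper x_nonneg by (intro sum_mono mult_mono) (auto simp: x_def)
  also have "\<dots> = (real r)\<^sup>2 * (x\<^sup>2 * g)"
    by (simp add: power2_eq_square mult_ac)
  also have "\<dots> \<le> (real r)\<^sup>2 * (108 * b ^ 6 / (real n ^ 3 * c ^ 5))"
    unfolding x_def g_def using entry_bounds_product_le[of "real n" c b] n_ge_3 c_pos c_le_b
    by (intro mult_left_mono) auto
  also have "\<dots> = 108 * (real r)\<^sup>2 * b ^ 6 / (real n ^ 3 * c ^ 5)"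
    by (simp add: mult_ac)
  finally show ?thesis .
qed

end

lemma index_mult_mat_sum:
  assumes "A \<in> carrier_mat n k" "B \<in> carrier_mat k m" "i < n" "j < m"
  shows "(A * B) $$ (i, j) = (\<Sum>l<k. A $$ (i, l) * B $$ (l, j))"
  using assms by (simp add: scalar_prod_def atLeast0LessThan)

lemma index_mult_mat_vec_sum:
  assumes "A \<in> carrier_mat n k" "v \<in> carrier_vec k" "i < n"
  shows "(A *\<^sub>v v) $ i = (\<Sum>l<k. A $$ (i, l) * v $ l)"
  using assms by (simp add: scalar_prod_def atLeast0LessThan)

lemma mat_inverse_if_trivial_kernel:
  fixes A :: "'a :: field mat"
  assumes A: "A \<in> carrier_mat n n"
    and ker: "\<And>v. v \<in> carrier_vec n \<Longrightarrow> A *\<^sub>v v = 0\<^sub>v n \<Longrightarrow> v = 0\<^sub>v n"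
  obtains B where "mat_inverse A = Some B" "A * B = 1\<^sub>m n" "B * A = 1\<^sub>m n" "B \<in> carrier_mat n n"
proof -
  have "det A \<noteq> 0"
    using det_0_iff_vec_prod_zero[OF A] ker by blast
  then have "A \<in> Units (ring_mat TYPE('a) n ())"
    by (rule det_non_zero_imp_unit[OF A])
  then obtain B where "mat_inverse A = Some B"
    using mat_inverse(1)[OF A, of "()"] by (cases "mat_inverse A") auto
  with mat_inverse(2)[OF A this] that show ?thesis
    by blast
qed

lemma max_norm_le:
  assumes "0 < dim_row A" "0 < dim_col A"
    and "\<And>i j. i < dim_row A \<Longrightarrow> j < dim_col A \<Longrightarrow> \<bar>A $$ (i, j)\<bar> \<le> B"
  shows "max_norm A \<le> B"
  unfolding max_norm_def
proof (rule Max.boundedI)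
  show "finite {\<bar>A $$ (i, j)\<bar> |i j. i < dim_row A \<and> j < dim_col A}"
    by (rule finite_image_set2) auto
  show "{\<bar>A $$ (i, j)\<bar> |i j. i < dim_row A \<and> j < dim_col A} \<noteq> {}"
    using assms(1,2) by blast
qed (use assms(3) in auto)

lemma br_block_diff_cancel:
  assumes "A \<in> carrier_mat n n" "S \<in> carrier_mat n n" "B \<in> carrier_mat (n - r) (n - r)"
  shows "br_block r (A - S) - (B - br_block r S) = br_block r A - B"
  using assms by (intro eq_matI) (auto simp: br_block_def)

context signless_laplacian
begin

definition Q_mat :: "real mat" where
  "Q_mat = mat n n (\<lambda>(i, j). Q i j)"

lemma Q_mat_carrier: "Q_mat \<in> carrier_mat n n"
  by (simp add: Q_mat_def)

lemma br_block_Q_mat_carrier: "br_block r Q_mat \<in> carrier_mat (n - r) (n - r)"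
  by (simp add: Q_mat_def br_block_def)

lemma index_Q_mat: "i < n \<Longrightarrow> j < n \<Longrightarrow> Q_mat $$ (i, j) = Q i j"
  by (simp add: Q_mat_def)

lemma index_br_block_Q_mat:
  "i < n - r \<Longrightarrow> j < n - r \<Longrightarrow> br_block r Q_mat $$ (i, j) = Q (i + r) (j + r)"
  by (simp add: Q_mat_def br_block_def)

lemma Q_mat_invertible:
  obtains G where "mat_inverse Q_mat = Some G" "Q_mat * G = 1\<^sub>m n" "G * Q_mat = 1\<^sub>m n"
    "G \<in> carrier_mat n n"
proof (rule mat_inverse_if_trivial_kernel[OF Q_mat_carrier])
  fix v :: "real vec"
  assume v: "v \<in> carrier_vec n" and Qv: "Q_mat *\<^sub>v v = 0\<^sub>v n"
  have "(\<Sum>k<n. Q i k * v $ k) = 0" if "i < n" for i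
    using index_mult_mat_vec_sum[OF Q_mat_carrier v that] Qv that by (simp add: index_Q_mat)
  then have "v $ i = 0" if "i < n" for i
    using that by (intro eq_zero_if_orthogonal[of "\<lambda>k. v $ k"]) auto
  then show "v = 0\<^sub>v n"
    using v by (intro eq_vecI) auto
qed

lemma br_block_Q_mat_invertible:
  obtains H where "mat_inverse (br_block r Q_mat) = Some H" "br_block r Q_mat * H = 1\<^sub>m (n - r)"
    "H * br_block r Q_mat = 1\<^sub>m (n - r)" "H \<in> carrier_mat (n - r) (n - r)"
proof (rule mat_inverse_if_trivial_kernel[OF br_block_Q_mat_carrier])
  fix v :: "real vec"
  assume v: "v \<in> carrier_vec (n - r)" and Dv: "br_block r Q_mat *\<^sub>v v = 0\<^sub>v (n - r)"
  define y where "y k = (if r \<le> k then v $ (k - r) else 0)" for k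
  have "y p * (\<Sum>k<n. Q p k * y k) = 0" if "p < n" for p
  proof (cases "r \<le> p")
    case True
    have "(\<Sum>k<n. Q p k * y k) = (\<Sum>k\<in>{r..<n}. Q p k * v $ (k - r))"
      unfolding y_def sum_lessThan_if_ge[symmetric] by (rule sum.cong) auto
    also have "\<dots> = (\<Sum>k<n - r. br_block r Q_mat $$ (p - r, k) * v $ k)"
      using True that by (simp add: sum_atLeastLessThan_eq_sum_lessThan_shift index_br_block_Q_mat)
    also have "\<dots> = 0"
      using index_mult_mat_vec_sum[OF br_block_Q_mat_carrier v, of "p - r"] Dv True that by simp
    finally show ?thesis by simp
  qed (simp add: y_def)
  then have "v $ i = 0" if "i < n - r" for i
    using eq_zero_if_orthogonal[of y "i + r"] that by (simp add: y_def)
  then show "v = 0\<^sub>v (n - r)"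
    using v by (intro eq_vecI) auto
qed

lemma signless_laplacian_inverses_of_mat:
  assumes "r < n"
    and "Q_mat * G = 1\<^sub>m n" "G * Q_mat = 1\<^sub>m n" "G \<in> carrier_mat n n"
    and "br_block r Q_mat * H = 1\<^sub>m (n - r)" "H \<in> carrier_mat (n - r) (n - r)"
  shows "signless_laplacian_inverses n w b c r (\<lambda>i j. G $$ (i, j)) (\<lambda>i j. H $$ (i - r, j - r))"
proof unfold_locales
  fix i j assume ij: "i < n" "j < n"
  show "(\<Sum>l<n. Q i l * G $$ (l, j)) = (if i = j then 1 else 0)"
    using index_mult_mat_sum[OF Q_mat_carrier assms(4) ij] assms(2) ij by (simp add: index_Q_mat)
  show "(\<Sum>l<n. G $$ (i, l) * Q l j) = (if i = j then 1 else 0)"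
    using index_mult_mat_sum[OF assms(4) Q_mat_carrier ij] assms(3) ij by (simp add: index_Q_mat)
next
  fix i j assume ij: "r \<le> i" "i < n" "r \<le> j" "j < n"
  have "(\<Sum>l\<in>{r..<n}. Q i l * H $$ (l - r, j - r))
      = (\<Sum>l<n - r. br_block r Q_mat $$ (i - r, l) * H $$ (l, j - r))"
    using ij by (simp add: sum_atLeastLessThan_eq_sum_lessThan_shift index_br_block_Q_mat)
  also have "\<dots> = (br_block r Q_mat * H) $$ (i - r, j - r)"
    using index_mult_mat_sum[OF br_block_Q_mat_carrier assms(6)] ij by simp
  finally show "(\<Sum>l\<in>{r..<n}. Q i l * H $$ (l - r, j - r)) = (if i = j then 1 else 0)"
    using assms(5) ij by auto
qed (fact assms(1))

lemma max_norm_br_block_inverse_diff: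
  assumes "r < n"
  shows "max_norm (br_block r (minv Q_mat) - minv (br_block r Q_mat))
    \<le> 108 * (real r)\<^sup>2 * b ^ 6 / (real n ^ 3 * c ^ 5)"
proof -
  obtain G where G: "mat_inverse Q_mat = Some G" "Q_mat * G = 1\<^sub>m n" "G * Q_mat = 1\<^sub>m n"
    "G \<in> carrier_mat n n"
    by (rule Q_mat_invertible)
  obtain H where H: "mat_inverse (br_block r Q_mat) = Some H" "br_block r Q_mat * H = 1\<^sub>m (n - r)"
    "H \<in> carrier_mat (n - r) (n - r)"
    by (rule br_block_Q_mat_invertible)
  interpret signless_laplacian_inverses n w b c r "\<lambda>i j. G $$ (i, j)" "\<lambda>i j. H $$ (i - r, j - r)"
    using assms G H by (intro signless_laplacian_inverses_of_mat)
  show ?thesis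
    unfolding minv_def G(1) H(1) option.sel
  proof (rule max_norm_le)
    fix i j
    assume "i < dim_row (br_block r G - H)" "j < dim_col (br_block r G - H)"
    then have "i < n - r" "j < n - r"
      using H(3) by auto
    then show "\<bar>(br_block r G - H) $$ (i, j)\<bar> \<le> 108 * (real r)\<^sup>2 * b ^ 6 / (real n ^ 3 * c ^ 5)"
      using G_minus_H_bound[of "i + r" "j + r"] G(4) H(3) by (simp add: br_block_def)
  qed (use assms H(3) in auto)
qed

end

lemma beta_model_signless_laplacian:
  assumes "3 \<le> n"
  shows "signless_laplacian n (\<lambda>i j. if i = j then 0 else bm_v \<beta> i j) (bm_b n \<beta>) (bm_c n \<beta>)"
proof -
  define T where "T = {(1 + exp (\<beta> i + \<beta> j))\<^sup>2 / exp (\<beta> i + \<beta> j) | i j. i < n \<and> j < n \<and> i \<noteq> j}"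
  have T_finite: "finite T"
  proof (rule finite_subset)
    show "T \<subseteq> (\<lambda>(i, j). (1 + exp (\<beta> i + \<beta> j))\<^sup>2 / exp (\<beta> i + \<beta> j)) ` ({..<n} \<times> {..<n})"
      unfolding T_def by auto
  qed auto
  have v_pos: "0 < bm_v \<beta> i j" for i j
    unfolding bm_v_def by (intro divide_pos_pos exp_gt_zero zero_less_power add_pos_pos) simp
  have T_pos: "0 < t" if t: "t \<in> T" for t
  proof -
    obtain i j where "t = (1 + exp (\<beta> i + \<beta> j))\<^sup>2 / exp (\<beta> i + \<beta> j)"
      using t unfolding T_def by blast
    also have "\<dots> = 1 / bm_v \<beta> i j"
      by (simp add: bm_v_def)
    finally show ?thesis
      using v_pos[of i j] by simp
  qed
  have T_mem: "1 / bm_v \<beta> i j \<in> T" if "i < n" "j < n" "i \<noteq> j" for i j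
    unfolding T_def bm_v_def using that by auto
  have c_le: "bm_c n \<beta> \<le> 1 / bm_v \<beta> i j" if "i < n" "j < n" "i \<noteq> j" for i j
    unfolding bm_c_def T_def[symmetric] using Min_le[OF T_finite T_mem[OF that]] .
  have b_ge: "1 / bm_v \<beta> i j \<le> bm_b n \<beta>" if "i < n" "j < n" "i \<noteq> j" for i j
    unfolding bm_b_def T_def[symmetric] using Max_ge[OF T_finite T_mem[OF that]] .
  have "T \<noteq> {}"
    using T_mem[of 0 1] assms by auto
  then have c_pos: "0 < bm_c n \<beta>"
    unfolding bm_c_def T_def[symmetric] using Min_in[OF T_finite] T_pos by blast
  have c_le_b: "bm_c n \<beta> \<le> bm_b n \<beta>"
    using c_le[of 0 1] b_ge[of 0 1] assms by simp
  show ?thesis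
  proof unfold_locales
    fix i j assume "i < n" "j < n" "i \<noteq> j"
    then show "1 / bm_b n \<beta> \<le> (if i = j then 0 else bm_v \<beta> i j)"
      using b_ge[of i j] v_pos[of i j] c_pos c_le_b by (simp add: field_simps)
  next
    fix i j assume "i < n" "j < n"
    then show "(if i = j then 0 else bm_v \<beta> i j) \<le> 1 / bm_c n \<beta>"
      using c_le[of i j] v_pos[of i j] c_pos by (simp add: field_simps)
  qed (use assms c_pos c_le_b in \<open>auto simp: bm_v_def add.commute\<close>)
qed

lemma bm_V_eq_Q_mat:
  assumes "3 \<le> n"
  shows "bm_V n \<beta> = signless_laplacian.Q_mat n (\<lambda>i j. if i = j then 0 else bm_v \<beta> i j)"
proof -
  interpret signless_laplacian n "\<lambda>i j. if i = j then 0 else bm_v \<beta> i j" "bm_b n \<beta>" "bm_c n \<beta>"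
    using assms by (rule beta_model_signless_laplacian)
  show ?thesis
  proof (rule eq_matI)
    fix i j assume "i < dim_row Q_mat" "j < dim_col Q_mat"
    then have ij: "i < n" "j < n"
      using Q_mat_carrier by auto
    have "(\<Sum>k<n. if m = k then 0 else bm_v \<beta> m k) = (\<Sum>k\<in>{0..<n} - {m}. bm_v \<beta> m k)" for m
      by (rule sum.mono_neutral_cong_right) auto
    then show "bm_V n \<beta> $$ (i, j) = Q_mat $$ (i, j)"
      using ij by (cases "i = j") (simp_all add: bm_V_def index_Q_mat Q_def)
  qed (use Q_mat_carrier in \<open>simp_all add: bm_V_def\<close>)
qed

theorem lemma10:
  fixes r :: nat
  assumes "r > 0"
  shows "\<exists>C N. \<forall>n \<ge> N. \<forall>\<beta> :: nat \<Rightarrow> real. n > r \<longrightarrow>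
           max_norm (bm_W22 r n \<beta> - bm_W22_tilde r n \<beta>)
             \<le> C * bm_b n \<beta> ^ 6 / (real n ^ 3 * bm_c n \<beta> ^ 5)"
proof (intro exI[of _ "108 * (real r)\<^sup>2"] exI[of _ 3] allI impI)
  fix n :: nat and \<beta> :: "nat \<Rightarrow> real"
  assume "3 \<le> n" "r < n"
  interpret signless_laplacian n "\<lambda>i j. if i = j then 0 else bm_v \<beta> i j" "bm_b n \<beta>" "bm_c n \<beta>"
    using \<open>3 \<le> n\<close> by (rule beta_model_signless_laplacian)
  obtain G where "mat_inverse Q_mat = Some G" "G \<in> carrier_mat n n"
    by (rule Q_mat_invertible)
  moreover obtain H where "mat_inverse (br_block r Q_mat) = Some H" "H \<in> carrier_mat (n - r) (n - r)"
    by (rule br_block_Q_mat_invertible)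
  moreover have "bm_S n \<beta> \<in> carrier_mat n n"
    by (simp add: bm_S_def)
  ultimately have "bm_W22 r n \<beta> - bm_W22_tilde r n \<beta> = br_block r (minv Q_mat) - minv (br_block r Q_mat)"
    unfolding bm_W22_def bm_W22_tilde_def bm_V_eq_Q_mat[OF \<open>3 \<le> n\<close>] minv_def by (simp add: br_block_diff_cancel)
  then show "max_norm (bm_W22 r n \<beta> - bm_W22_tilde r n \<beta>)
      \<le> 108 * (real r)\<^sup>2 * bm_b n \<beta> ^ 6 / (real n ^ 3 * bm_c n \<beta> ^ 5)"
    using max_norm_br_block_inverse_diff[OF \<open>r < n\<close>] by simp
qed

end
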